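(* An element $r\in\mathrm{Im}(1\otimes1-\tau)\subset\mathfrak{L}\otimes\mathfrak{L}$ satisfies the classical Yang–Baxter equation $c(r)=0$ if and only if it satisfies the modified Yang–Baxter equation $x\circ c(r)=0$ for all $x\in\mathfrak{L}$.
   Context: Let $\Gamma$ be a nontrivial additive subgroup of $\mathbb{R}$, and let $s\in\mathbb{R}$ with $2s\in\Gamma$. The Lie superalgebra $\mathfrak{L}$ over $\mathbb{C}$ has basis $\{L_p,I_p,G_r,H_r\mid p\in\Gamma,\ r\in s+\Gamma\}$. Here $L_p,I_p$ are even and $G_r,H_r$ are odd. The nonzero super-brackets are $[L_p,L_q]=(p-q)L_{p+q}$, $[L_p,I_q]=(p-q)I_{p+q}$, $[L_p,G_r]=(\tfrac p2-r)G_{p+r}$, $[L_p,H_r]=(\tfrac p2-r)H_{p+r}$, $[G_r,G_t]=I_{r+t}$, $[I_p,G_r]=(p-2r)H_{p+r}$. All other brackets of basis elements vanish, apart from those forced by super-antisymmetry. Conventions: - $[x]$ is the parity of $x$, and $\tau(x\otimes y)=(-1)^{[x][y]}y\otimes x$. - $\mathfrak{L}$ acts on tensor powers of itself by the diagonal adjoint action, e.g. $x\circ(a\otimes b)=[x,a]\otimes b+(-1)^{[x][a]}a\otimes[x,b]$, and similarly on triple tensors with the Koszul sign rule. For $r=\sum_i a_i\otimes b_i$ with homogeneous $a_i,b_i$, define $c(r)=\sum_{i,j}\Big((-1)^{[a_j][b_i]}[a_i,a_j]\otimes b_i\otimes b_j+a_i\otimes[b_i,a_j]\otimes b_j+(-1)^{[a_j][b_i]}a_i\otimes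 a_j\otimes[b_i,b_j]\Big)\in\mathfrak{L}^{\otimes3}$. *)

theory Defs
  imports Complex_Main
begin

text \<open>Basis of the Lie superalgebra: L_p, I_p (even), G_r, H_r (odd).
  Elements of the algebra and of its tensor powers are represented by their
  coefficient functions with respect to this basis (resp. the induced tensor
  basis), required to be finitely supported on the admissible index sets.\<close>

datatype bas = L real | I real | G real | H real

fun odd_b :: "bas \<Rightarrow> bool" where
  "odd_b (L _) = False" | "odd_b (I _) = False"
| "odd_b (G _) = True"  | "odd_b (H _) = True"

definition sg :: "bas \<Rightarrow> bas \<Rightarrow> complex" where
  "sg a b = (if odd_b a \<and> odd_b b then -1 else 1)"

definition supp :: "('a \<Rightarrow> complex) \<Rightarrow> 'a set" where
  "supp f = {x. f x \<noteq> 0}"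

definition bv :: "complex \<Rightarrow> bas \<Rightarrow> bas \<Rightarrow> complex" where
  "bv c b = (\<lambda>x. if x = b then c else 0)"

definition dl :: "bas \<Rightarrow> bas \<Rightarrow> complex" where
  "dl a b = (if a = b then 1 else 0)"

text \<open>Super-bracket of basis elements (including those forced by super-antisymmetry).\<close>
fun br :: "bas \<Rightarrow> bas \<Rightarrow> bas \<Rightarrow> complex" where
  "br (L p) (L q) = bv (of_real (p - q)) (L (p + q))"
| "br (L p) (I q) = bv (of_real (p - q)) (I (p + q))"
| "br (I q) (L p) = bv (- of_real (p - q)) (I (p + q))"
| "br (L p) (G r) = bv (of_real (p/2 - r)) (G (p + r))"
| "br (G r) (L p) = bv (- of_real (p/2 - r)) (G (p + r))"
| "br (L p) (H r) = bv (of_real (p/2 - r)) (H (p + r))"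
| "br (H r) (L p) = bv (- of_real (p/2 - r)) (H (p + r))"
| "br (G r) (G t) = bv 1 (I (r + t))"
| "br (I p) (G r) = bv (of_real (p - 2*r)) (H (p + r))"
| "br (G r) (I p) = bv (- of_real (p - 2*r)) (H (p + r))"
| "br _ _ = (\<lambda>_. 0)"

fun adm :: "real set \<Rightarrow> real \<Rightarrow> bas \<Rightarrow> bool" where
  "adm \<Gamma> s (L p) = (p \<in> \<Gamma>)" | "adm \<Gamma> s (I p) = (p \<in> \<Gamma>)"
| "adm \<Gamma> s (G r) = (r - s \<in> \<Gamma>)" | "adm \<Gamma> s (H r) = (r - s \<in> \<Gamma>)"

definition Lsp :: "real set \<Rightarrow> real \<Rightarrow> (bas \<Rightarrow> complex) set" where
  "Lsp \<Gamma> s = {u. finite (supp u) \<and> (\<forall>a\<in>supp u. adm \<Gamma> s a)}"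

definition Lsp2 :: "real set \<Rightarrow> real \<Rightarrow> (bas \<times> bas \<Rightarrow> complex) set" where
  "Lsp2 \<Gamma> s = {t. finite (supp t) \<and> (\<forall>(a,b)\<in>supp t. adm \<Gamma> s a \<and> adm \<Gamma> s b)}"

text \<open>The flip \<tau>(a \<otimes> b) = (-1)^([a][b]) b \<otimes> a, on coefficient functions.\<close>
definition tau :: "(bas \<times> bas \<Rightarrow> complex) \<Rightarrow> bas \<times> bas \<Rightarrow> complex" where
  "tau t = (\<lambda>(p,q). sg p q * t (q,p))"

definition ImTau :: "real set \<Rightarrow> real \<Rightarrow> (bas \<times> bas \<Rightarrow> complex) set" where
  "ImTau \<Gamma> s = {(\<lambda>z. t z - tau t z) | t. t \<in> Lsp2 \<Gamma> s}"

definition cybe :: "(bas \<times> bas \<Rightarrow> complex) \<Rightarrow> bas \<times> bas \<times> bas \<Rightarrow> complex" where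
  "cybe r = (\<lambda>(z1,z2,z3). \<Sum>(a,b)\<in>supp r. \<Sum>(a',b')\<in>supp r. r (a,b) * r (a',b') *
      ( sg a' b * br a a' z1 * dl b z2 * dl b' z3
      + dl a z1 * br b a' z2 * dl b' z3
      + sg a' b * dl a z1 * dl a' z2 * br b b' z3))"

definition actb :: "bas \<Rightarrow> (bas \<times> bas \<times> bas \<Rightarrow> complex) \<Rightarrow> bas \<times> bas \<times> bas \<Rightarrow> complex" where
  "actb x T = (\<lambda>(z1,z2,z3). \<Sum>(a,b,c)\<in>supp T. T (a,b,c) *
      ( br x a z1 * dl b z2 * dl c z3
      + sg x a * dl a z1 * br x b z2 * dl c z3
      + sg x a * sg x b * dl a z1 * dl b z2 * br x c z3))"

definition act :: "(bas \<Rightarrow> complex) \<Rightarrow> (bas \<times> bas \<times> bas \<Rightarrow> complex) \<Rightarrow> bas \<times> bas \<times> bas \<Rightarrow> complex" where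
  "act u T = (\<lambda>z. \<Sum>x\<in>supp u. u x * actb x T z)"

end

theory Submission
  imports Defs
begin

text \<open>The direction from the classical to the modified equation is trivial. Conversely, any
  finitely supported triple tensor T killed by all L_p is zero: pick a basis tensor in the
  support of T whose first factor has maximal index and a p > 0 in \<Gamma>. Since ad L_p raises
  indices by p, the coefficient of that tensor, shifted by p in the first factor, in L_p \<circ> T
  comes from a single term and equals its coefficient in T times the scalar of [L_p, a];
  p can be chosen so that this scalar is nonzero. Finiteness of the support of c(r) is all
  that is used about r.\<close>

fun bas_index :: "bas \<Rightarrow> real" where
  "bas_index (L p) = p" | "bas_index (I p) = p" | "bas_index (G p) = p" | "bas_index (H p) = p"

fun bas_shift :: "real \<Rightarrow> bas \<Rightarrow> bas" where
  "bas_shift p (L q) = L (p + q)" | "bas_shift p (I q) = I (p + q)"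
| "bas_shift p (G q) = G (p + q)" | "bas_shift p (H q) = H (p + q)"

fun ad_L_coeff :: "real \<Rightarrow> bas \<Rightarrow> real" where
  "ad_L_coeff p (L q) = p - q" | "ad_L_coeff p (I q) = p - q"
| "ad_L_coeff p (G q) = p/2 - q" | "ad_L_coeff p (H q) = p/2 - q"

lemma br_L_left: "br (L p) a = bv (of_real (ad_L_coeff p a)) (bas_shift p a)"
  by (cases a) auto

lemma sg_L_left: "sg (L p) a = 1"
  by (simp add: sg_def)

lemma bas_index_shift: "bas_index (bas_shift p a) = p + bas_index a"
  by (cases a) auto

lemma bas_shift_inject: "bas_shift p a = bas_shift p a' \<longleftrightarrow> a = a'"
  by (cases a; cases a') auto

lemma actb_L_at_top:
  assumes fin: "finite (supp T)" and top: "(a0,b0,c0) \<in> supp T"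
    and maximal: "\<And>a b c. (a,b,c) \<in> supp T \<Longrightarrow> bas_index a \<le> bas_index a0"
    and "p > 0"
  shows "actb (L p) T (bas_shift p a0, b0, c0) = T (a0,b0,c0) * of_real (ad_L_coeff p a0)"
proof -
  have summand: "T (a,b,c) *
      (br (L p) a (bas_shift p a0) * dl b b0 * dl c c0
      + sg (L p) a * dl a (bas_shift p a0) * br (L p) b b0 * dl c c0
      + sg (L p) a * sg (L p) b * dl a (bas_shift p a0) * dl b b0 * br (L p) c c0)
    = (if (a,b,c) = (a0,b0,c0) then T (a0,b0,c0) * of_real (ad_L_coeff p a0) else 0)"
    if "(a,b,c) \<in> supp T" for a b c
  proof -
    have "a \<noteq> bas_shift p a0"
      using maximal[OF that] \<open>p > 0\<close> bas_index_shift[of p a0] by auto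
    then show ?thesis
      by (auto simp: br_L_left bv_def dl_def bas_shift_inject)
  qed
  have "actb (L p) T (bas_shift p a0, b0, c0) =
      (\<Sum>t\<in>supp T. if t = (a0,b0,c0) then T (a0,b0,c0) * of_real (ad_L_coeff p a0) else 0)"
    unfolding actb_def prod.case
    by (intro sum.cong refl) (clarify, simp only: prod.case summand)
  also have "\<dots> = T (a0,b0,c0) * of_real (ad_L_coeff p a0)"
    using fin top by simp
  finally show ?thesis .
qed

lemma exists_pos_ad_L_coeff_nonzero:
  assumes "0 \<in> \<Gamma>" "\<forall>p\<in>\<Gamma>. \<forall>q\<in>\<Gamma>. p + q \<in> \<Gamma>" "\<forall>p\<in>\<Gamma>. - p \<in> \<Gamma>" "\<Gamma> \<noteq> {0}"
  shows "\<exists>p\<in>\<Gamma>. p > 0 \<and> ad_L_coeff p a \<noteq> 0"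
proof -
  obtain g0 where "g0 \<in> \<Gamma>" "g0 \<noteq> 0"
    using assms(1,4) by blast
  moreover have "- g0 \<in> \<Gamma>"
    using \<open>g0 \<in> \<Gamma>\<close> assms(3) by blast
  ultimately obtain g where g: "g \<in> \<Gamma>" "g > 0"
    by (metis neg_0_less_iff_less linorder_neqE_linordered_idom)
  \<comment> \<open>ad_L_coeff is affine in p with nonzero slope, so it cannot vanish at both g and 2g.\<close>
  have "ad_L_coeff g a \<noteq> 0 \<or> ad_L_coeff (g + g) a \<noteq> 0"
    using g by (cases a) auto
  moreover have "g + g \<in> \<Gamma>"
    using g assms(2) by blast
  ultimately show ?thesis
    using g add_pos_pos[of g g] by blast
qed

lemma triple_tensor_L_invariant_eq_zero:
  assumes "0 \<in> \<Gamma>" "\<forall>p\<in>\<Gamma>. \<forall>q\<in>\<Gamma>. p + q \<in> \<Gamma>" "\<forall>p\<in>\<Gamma>. - p \<in> \<Gamma>" "\<Gamma> \<noteq> {0}"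
    and fin: "finite (supp T)"
    and inv: "\<And>p. p \<in> \<Gamma> \<Longrightarrow> actb (L p) T = (\<lambda>_. 0)"
  shows "T = (\<lambda>_. 0)"
proof (rule ccontr)
  assume "T \<noteq> (\<lambda>_. 0)"
  then have "supp T \<noteq> {}"
    by (auto simp: supp_def)
  define m where "m = Max ((\<lambda>t. bas_index (fst t)) ` supp T)"
  have "m \<in> (\<lambda>t. bas_index (fst t)) ` supp T"
    unfolding m_def using fin \<open>supp T \<noteq> {}\<close> by (intro Max_in) auto
  then obtain a0 b0 c0 where top: "(a0,b0,c0) \<in> supp T" and "m = bas_index a0"
    by force
  have maximal: "bas_index a \<le> bas_index a0" if "(a,b,c) \<in> supp T" for a b c
  proof -
    have "bas_index (fst (a,b,c)) \<le> m"
      unfolding m_def using fin that by (intro Max_ge) force+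
    then show ?thesis
      using \<open>m = bas_index a0\<close> by simp
  qed
  obtain p where "p \<in> \<Gamma>" "p > 0" "ad_L_coeff p a0 \<noteq> 0"
    using exists_pos_ad_L_coeff_nonzero[OF assms(1-4)] by blast
  then have "actb (L p) T (bas_shift p a0, b0, c0) \<noteq> 0"
    using actb_L_at_top[OF fin top maximal] top by (simp add: supp_def)
  with inv[OF \<open>p \<in> \<Gamma>\<close>] show False
    by simp
qed

lemma finite_supp_br: "finite (supp (br a b))"
proof -
  have "supp (bv c x) \<subseteq> {x}" for c x
    by (auto simp: supp_def bv_def)
  then have "finite {z. bv c x z \<noteq> 0}" for c x
    unfolding supp_def by (rule finite_subset) simp
  then show ?thesis
    by (cases a; cases b) (simp_all only: br.simps supp_def, simp_all)
qed

lemma finite_supp_cybe: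
  assumes "finite (supp r)"
  shows "finite (supp (cybe r))"
proof -
  define B0 where "B0 = fst ` supp r \<union> snd ` supp r"
  define B where "B = B0 \<union> (\<Union>a\<in>B0. \<Union>a'\<in>B0. supp (br a a'))"
  have "finite B"
    unfolding B_def B0_def using assms finite_supp_br by auto
  moreover have "supp (cybe r) \<subseteq> B \<times> B \<times> B"
  proof
    fix z assume z: "z \<in> supp (cybe r)"
    obtain z1 z2 z3 where zz: "z = (z1,z2,z3)"
      by (cases z) auto
    have outside: "x \<notin> B \<Longrightarrow> a \<in> B0 \<Longrightarrow> a' \<in> B0 \<Longrightarrow> br a a' x = 0"
      "x \<notin> B \<Longrightarrow> a \<in> B0 \<Longrightarrow> dl a x = 0" for a a' x
      unfolding B_def supp_def dl_def by auto
    have in_B0: "a \<in> B0" "b \<in> B0" if "(a,b) \<in> supp r" for a b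
      using that unfolding B0_def by force+
    have "cybe r z = 0" if "z \<notin> B \<times> B \<times> B"
      unfolding cybe_def zz
      using that zz by (auto intro!: sum.neutral simp: outside in_B0 split: prod.split)
    then show "z \<in> B \<times> B \<times> B"
      using z by (auto simp: supp_def)
  qed
  ultimately show ?thesis
    by (meson finite_SigmaI finite_subset)
qed

lemma finite_supp_ImTau:
  assumes "r \<in> ImTau \<Gamma> s"
  shows "finite (supp r)"
proof -
  obtain t where t: "t \<in> Lsp2 \<Gamma> s" and r: "r = (\<lambda>z. t z - tau t z)"
    using assms unfolding ImTau_def by blast
  have "supp r \<subseteq> supp t \<union> prod.swap ` supp t"
    using r by (force simp: supp_def tau_def)
  moreover have "finite (supp t)"
    using t unfolding Lsp2_def by auto
  ultimately show ?thesis
    by (meson finite_Un finite_imageI finite_subset)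
qed

lemma act_basis_L: "act (bv 1 (L p)) T = actb (L p) T"
proof -
  have "supp (bv 1 (L p)) = {L p}"
    by (auto simp: supp_def bv_def)
  then show ?thesis
    by (simp add: act_def bv_def)
qed

lemma basis_L_in_Lsp: "p \<in> \<Gamma> \<Longrightarrow> bv 1 (L p) \<in> Lsp \<Gamma> s"
  by (auto simp: Lsp_def supp_def bv_def)

theorem mainTheorem5:
  fixes \<Gamma> :: "real set" and s :: real and r :: "bas \<times> bas \<Rightarrow> complex"
  assumes "0 \<in> \<Gamma>" and "\<forall>p\<in>\<Gamma>. \<forall>q\<in>\<Gamma>. p + q \<in> \<Gamma>" and "\<forall>p\<in>\<Gamma>. - p \<in> \<Gamma>"
    and "\<Gamma> \<noteq> {0}"
    and "2 * s \<in> \<Gamma>"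
    and "r \<in> ImTau \<Gamma> s"
  shows "cybe r = (\<lambda>_. 0) \<longleftrightarrow> (\<forall>x\<in>Lsp \<Gamma> s. act x (cybe r) = (\<lambda>_. 0))"
proof
  assume "cybe r = (\<lambda>_. 0)"
  then show "\<forall>x\<in>Lsp \<Gamma> s. act x (cybe r) = (\<lambda>_. 0)"
    by (simp add: act_def actb_def supp_def)
next
  assume "\<forall>x\<in>Lsp \<Gamma> s. act x (cybe r) = (\<lambda>_. 0)"
  then have "actb (L p) (cybe r) = (\<lambda>_. 0)" if "p \<in> \<Gamma>" for p
    using basis_L_in_Lsp[OF that] act_basis_L by metis
  moreover have "finite (supp (cybe r))"
    using finite_supp_cybe[OF finite_supp_ImTau[OF assms(6)]] .
  ultimately show "cybe r = (\<lambda>_. 0)"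
    using triple_tensor_L_invariant_eq_zero[OF assms(1-4)] by blast
qed

end
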